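(* Let $G=(V,E,p,(V_{E},V_{O}))$ be a parity game, let $D$ be an Odd-dominion of $G$, and let $D'\subseteq D$ be nonempty such that for every edge $(u,w)\in E$ with $u\in D'$ and $w\in D\setminus D'$ we have $u\in V_{E}$. Let $U\subseteq V$ be such that $G\cap U$ is a parity game (every vertex of $U$ has a successor in $U$), $D'\subseteq U$ and $U\cap(D\setminus D')=\emptyset$. Then $D'$ is an Odd-dominion of $G\cap U$.
   Context: A parity game $G=(V,E,p,(V_{E},V_{O}))$: finite $V$ partitioned into $V_{E}$ (Even) and $V_{O}$ (Odd), total edge relation $E$, priorities $p:V\to\mathbb{N}$. Plays are infinite paths; Even wins iff the least priority occurring infinitely often is even. $G\cap U$ denotes the game restricted to vertex set $U$ with edges $E\cap(U\times U)$. A set $D$ is an Odd-dominion of a game if Odd has a strategy in that game such that every play starting in $D$ consistent with it is won by Odd and stays in $D$. *)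

theory Defs
  imports Main
begin

text \<open>A parity game is given by a vertex set V, an edge relation E, a priority
function p and the set VE of vertices owned by Even; Odd owns V - VE.\<close>

definition parity_game :: "'v set \<Rightarrow> ('v \<times> 'v) set \<Rightarrow> ('v \<Rightarrow> nat) \<Rightarrow> 'v set \<Rightarrow> bool" where
  "parity_game V E p VE \<longleftrightarrow> finite V \<and> E \<subseteq> V \<times> V \<and> VE \<subseteq> V \<and>
     (\<forall>v\<in>V. \<exists>w. (v, w) \<in> E)"

definition odd_strategy :: "'v set \<Rightarrow> ('v \<times> 'v) set \<Rightarrow> 'v set \<Rightarrow> ('v list \<Rightarrow> 'v) \<Rightarrow> bool" where
  "odd_strategy V E VE \<sigma> \<longleftrightarrow>
     (\<forall>h. h \<noteq> [] \<and> last h \<in> V - VE \<longrightarrow> (last h, \<sigma> h) \<in> E)"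

definition consistent_play :: "'v set \<Rightarrow> ('v \<times> 'v) set \<Rightarrow> 'v set \<Rightarrow> ('v list \<Rightarrow> 'v)
    \<Rightarrow> 'v \<Rightarrow> (nat \<Rightarrow> 'v) \<Rightarrow> bool" where
  "consistent_play V E VE \<sigma> v \<rho> \<longleftrightarrow>
     \<rho> 0 = v \<and> (\<forall>i. (\<rho> i, \<rho> (Suc i)) \<in> E) \<and>
     (\<forall>i. \<rho> i \<in> V - VE \<longrightarrow> \<rho> (Suc i) = \<sigma> (map \<rho> [0..<Suc i]))"

definition odd_wins :: "('v \<Rightarrow> nat) \<Rightarrow> (nat \<Rightarrow> 'v) \<Rightarrow> bool" where
  "odd_wins p \<rho> \<longleftrightarrow> odd (LEAST k. \<exists>\<^sub>\<infinity>i. p (\<rho> i) = k)"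

definition odd_dominion :: "'v set \<Rightarrow> ('v \<times> 'v) set \<Rightarrow> ('v \<Rightarrow> nat) \<Rightarrow> 'v set \<Rightarrow> 'v set \<Rightarrow> bool" where
  "odd_dominion V E p VE D \<longleftrightarrow> D \<subseteq> V \<and>
     (\<exists>\<sigma>. odd_strategy V E VE \<sigma> \<and>
        (\<forall>v\<in>D. \<forall>\<rho>. consistent_play V E VE \<sigma> v \<rho> \<longrightarrow>
            (\<forall>i. \<rho> i \<in> D) \<and> odd_wins p \<rho>))"

end

theory Submission
  imports Defs
begin

text \<open>Let \<sigma> be Odd's strategy on the dominion D and let Odd play \<sigma> in G \<inter> U whenever
  \<sigma>'s move is legal there. Every finite \<sigma>-consistent history from D extends to an infinite
  \<sigma>-play, which D traps, so every \<sigma>-consistent move from such a history stays in D. Along a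
  play of G \<inter> U from D' this gives, inductively: an Even move lands in D \<inter> U \<subseteq> D'; \<sigma>'s
  move from an Odd vertex of D' lands in D but not in D - D', hence in D' \<subseteq> U, so it is legal
  and is the move actually played. The play is therefore a \<sigma>-play of G confined to D',
  and Odd wins it.\<close>

primrec history :: "'a \<Rightarrow> (nat \<Rightarrow> 'a list \<Rightarrow> 'a) \<Rightarrow> nat \<Rightarrow> 'a list" where
  "history x g 0 = [x]"
| "history x g (Suc k) = history x g k @ [g k (history x g k)]"

definition history_seq :: "'a \<Rightarrow> (nat \<Rightarrow> 'a list \<Rightarrow> 'a) \<Rightarrow> nat \<Rightarrow> 'a" where
  "history_seq x g k = last (history x g k)"

lemma map_history_seq: "map (history_seq x g) [0..<Suc k] = history x g k"
  by (induction k) (simp_all add: history_seq_def)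

lemma history_seq_0 [simp]: "history_seq x g 0 = x"
  by (simp add: history_seq_def)

lemma history_seq_Suc: "history_seq x g (Suc k) = g k (map (history_seq x g) [0..<Suc k])"
  by (simp only: map_history_seq) (simp add: history_seq_def)

definition consistent_prefix :: "'v set \<Rightarrow> ('v \<times> 'v) set \<Rightarrow> 'v set \<Rightarrow> ('v list \<Rightarrow> 'v)
    \<Rightarrow> (nat \<Rightarrow> 'v) \<Rightarrow> nat \<Rightarrow> bool" where
  "consistent_prefix V E VE \<sigma> \<rho> n \<longleftrightarrow>
     (\<forall>j<n. (\<rho> j, \<rho> (Suc j)) \<in> E \<and>
        (\<rho> j \<in> V - VE \<longrightarrow> \<rho> (Suc j) = \<sigma> (map \<rho> [0..<Suc j])))"

lemma consistent_prefix_0 [simp]: "consistent_prefix V E VE \<sigma> \<rho> 0"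
  by (simp add: consistent_prefix_def)

lemma consistent_prefix_Suc:
  "consistent_prefix V E VE \<sigma> \<rho> (Suc n) \<longleftrightarrow> consistent_prefix V E VE \<sigma> \<rho> n \<and>
     (\<rho> n, \<rho> (Suc n)) \<in> E \<and> (\<rho> n \<in> V - VE \<longrightarrow> \<rho> (Suc n) = \<sigma> (map \<rho> [0..<Suc n]))"
  unfolding consistent_prefix_def by (auto simp: less_Suc_eq simp del: upt_Suc)

lemma consistent_prefix_cong:
  assumes "\<forall>k\<le>n. \<rho>' k = \<rho> k"
  shows "consistent_prefix V E VE \<sigma> \<rho>' n \<longleftrightarrow> consistent_prefix V E VE \<sigma> \<rho> n"
proof -
  have "map \<rho>' [0..<Suc j] = map \<rho> [0..<Suc j]" if "j < n" for j
    using assms that by (intro map_cong) auto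
  then show ?thesis
    using assms unfolding consistent_prefix_def by (metis Suc_leI less_imp_le)
qed

lemma consistent_play_iff_prefixes:
  "consistent_play V E VE \<sigma> v \<rho> \<longleftrightarrow> \<rho> 0 = v \<and> (\<forall>n. consistent_prefix V E VE \<sigma> \<rho> n)"
  unfolding consistent_play_def consistent_prefix_def by (blast intro: lessI)

text \<open>Beyond the prefix, Odd follows \<sigma> and Even picks an arbitrary edge; the play is
  built by course-of-values recursion because \<sigma> depends on the whole history.\<close>

lemma consistent_prefix_extends:
  assumes EV: "E \<subseteq> V \<times> V" and total: "\<forall>v\<in>V. \<exists>w. (v, w) \<in> E"
    and \<sigma>: "odd_strategy V E VE \<sigma>" and "\<rho> 0 \<in> V" and prefix: "consistent_prefix V E VE \<sigma> \<rho> n"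
  shows "\<exists>\<rho>'. consistent_play V E VE \<sigma> (\<rho> 0) \<rho>' \<and> (\<forall>k\<le>n. \<rho>' k = \<rho> k)"
proof -
  define move where "move h = (if last h \<in> V - VE then \<sigma> h else SOME w. (last h, w) \<in> E)" for h
  define \<rho>' where "\<rho>' = history_seq (\<rho> 0) (\<lambda>k h. if k < n then \<rho> (Suc k) else move h)"
  have \<rho>'_Suc: "\<rho>' (Suc k) = (if k < n then \<rho> (Suc k) else move (map \<rho>' [0..<Suc k]))" for k
    unfolding \<rho>'_def by (rule history_seq_Suc)
  have "\<rho>' k = \<rho> k" if "k \<le> n" for k
    using that by (induction k) (simp_all add: \<rho>'_def \<rho>'_Suc[unfolded \<rho>'_def])
  then have agree: "\<forall>k\<le>n. \<rho>' k = \<rho> k" by blast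
  have prefix': "consistent_prefix V E VE \<sigma> \<rho>' n"
    using prefix consistent_prefix_cong[OF agree] by blast
  have move_edge: "(last h, move h) \<in> E" if "last h \<in> V" "h \<noteq> []" for h
    using that \<sigma> total someI_ex[of "\<lambda>w. (last h, w) \<in> E"]
    unfolding move_def odd_strategy_def by auto
  have late: "consistent_prefix V E VE \<sigma> \<rho>' (Suc k) \<and> \<rho>' (Suc k) \<in> V"
    if "consistent_prefix V E VE \<sigma> \<rho>' k" "\<rho>' k \<in> V" "n \<le> k" for k
  proof -
    have "\<rho>' (Suc k) = move (map \<rho>' [0..<Suc k])"
      using \<rho>'_Suc \<open>n \<le> k\<close> by simp
    then show ?thesis
      using that move_edge[of "map \<rho>' [0..<Suc k]"] EV
      by (auto simp: consistent_prefix_Suc move_def)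
  qed
  have "consistent_prefix V E VE \<sigma> \<rho>' k \<and> \<rho>' k \<in> V" for k
  proof (induction k)
    case 0
    show ?case using agree \<open>\<rho> 0 \<in> V\<close> by simp
  next
    case (Suc k)
    show ?case
    proof (cases "k < n")
      case True
      then have "consistent_prefix V E VE \<sigma> \<rho>' (Suc k)"
        using prefix' unfolding consistent_prefix_def by auto
      then show ?thesis using EV by (auto simp: consistent_prefix_Suc)
    qed (use Suc late in simp)
  qed
  then have "consistent_play V E VE \<sigma> (\<rho> 0) \<rho>'"
    using agree by (simp add: consistent_play_iff_prefixes)
  then show ?thesis using agree by blast
qed

definition odd_dominion_strategy :: "'v set \<Rightarrow> ('v \<times> 'v) set \<Rightarrow> ('v \<Rightarrow> nat) \<Rightarrow> 'v set
    \<Rightarrow> 'v set \<Rightarrow> ('v list \<Rightarrow> 'v) \<Rightarrow> bool" where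
  "odd_dominion_strategy V E p VE D \<sigma> \<longleftrightarrow> odd_strategy V E VE \<sigma> \<and>
     (\<forall>v\<in>D. \<forall>\<rho>. consistent_play V E VE \<sigma> v \<rho> \<longrightarrow> (\<forall>i. \<rho> i \<in> D) \<and> odd_wins p \<rho>)"

lemma odd_dominion_iff_strategy:
  "odd_dominion V E p VE D \<longleftrightarrow> D \<subseteq> V \<and> (\<exists>\<sigma>. odd_dominion_strategy V E p VE D \<sigma>)"
  unfolding odd_dominion_def odd_dominion_strategy_def by blast

lemma consistent_prefix_in_dominion:
  assumes "parity_game V E p VE" "D \<subseteq> V" "odd_dominion_strategy V E p VE D \<sigma>"
    and "\<rho> 0 \<in> D" "consistent_prefix V E VE \<sigma> \<rho> n"
  shows "\<rho> n \<in> D"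
proof -
  obtain \<rho>' where "consistent_play V E VE \<sigma> (\<rho> 0) \<rho>'" "\<forall>k\<le>n. \<rho>' k = \<rho> k"
    using consistent_prefix_extends[of E V VE \<sigma> \<rho> n] assms
    unfolding parity_game_def odd_dominion_strategy_def by blast
  then show ?thesis
    using assms(3,4) unfolding odd_dominion_strategy_def by (metis order_refl)
qed

lemma consistent_successor_in_dominion:
  assumes "parity_game V E p VE" "D \<subseteq> V" "odd_dominion_strategy V E p VE D \<sigma>"
    and "\<rho> 0 \<in> D" "consistent_prefix V E VE \<sigma> \<rho> n"
    and "(\<rho> n, w) \<in> E" "\<rho> n \<in> V - VE \<longrightarrow> w = \<sigma> (map \<rho> [0..<Suc n])"
  shows "w \<in> D"
proof -
  let ?\<rho> = "\<rho>(Suc n := w)"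
  have "\<forall>k\<le>n. ?\<rho> k = \<rho> k" by simp
  then have "consistent_prefix V E VE \<sigma> ?\<rho> (Suc n)"
    using assms(5-7) consistent_prefix_cong[of n ?\<rho> \<rho>] map_cong[of "[0..<Suc n]" _ ?\<rho> \<rho>]
    by (simp add: consistent_prefix_Suc del: upt_Suc)
  then show ?thesis
    using consistent_prefix_in_dominion[OF assms(1-3), of ?\<rho> "Suc n"] assms(4) by simp
qed

definition restrict_strategy :: "('v \<times> 'v) set \<Rightarrow> 'v set \<Rightarrow> ('v list \<Rightarrow> 'v) \<Rightarrow> 'v list \<Rightarrow> 'v" where
  "restrict_strategy E U \<sigma> h =
     (if (last h, \<sigma> h) \<in> E \<inter> U \<times> U then \<sigma> h else SOME w. (last h, w) \<in> E \<inter> U \<times> U)"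

lemma restrict_strategy_eq:
  "(last h, \<sigma> h) \<in> E \<Longrightarrow> last h \<in> U \<Longrightarrow> \<sigma> h \<in> U \<Longrightarrow> restrict_strategy E U \<sigma> h = \<sigma> h"
  by (simp add: restrict_strategy_def)

lemma odd_strategy_restrict_strategy:
  assumes "\<forall>v\<in>U. \<exists>w. (v, w) \<in> E \<inter> U \<times> U"
  shows "odd_strategy U (E \<inter> U \<times> U) (VE \<inter> U) (restrict_strategy E U \<sigma>)"
  unfolding odd_strategy_def
proof (intro allI impI)
  fix h :: "'a list"
  assume "h \<noteq> [] \<and> last h \<in> U - VE \<inter> U"
  then have "\<exists>w. (last h, w) \<in> E \<inter> U \<times> U" using assms by blast
  then have "(last h, SOME w. (last h, w) \<in> E \<inter> U \<times> U) \<in> E \<inter> U \<times> U" by (rule someI_ex)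
  then show "(last h, restrict_strategy E U \<sigma> h) \<in> E \<inter> U \<times> U"
    unfolding restrict_strategy_def by (subst if_split) blast
qed

lemma restricted_play_follows_strategy:
  assumes G: "parity_game V E p VE" and "D \<subseteq> V" and \<sigma>: "odd_dominion_strategy V E p VE D \<sigma>"
    and "D' \<subseteq> D" and closed: "\<forall>u w. (u, w) \<in> E \<and> u \<in> D' \<and> w \<in> D - D' \<longrightarrow> u \<in> VE"
    and "U \<subseteq> V" "D' \<subseteq> U" "U \<inter> (D - D') = {}"
    and "v \<in> D'" and play: "consistent_play U (E \<inter> U \<times> U) (VE \<inter> U) (restrict_strategy E U \<sigma>) v \<rho>"
  shows "consistent_prefix V E VE \<sigma> \<rho> n \<and> \<rho> n \<in> D'"
proof (induction n)
  case 0
  show ?case using play \<open>v \<in> D'\<close> by (simp add: consistent_play_def)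
next
  case (Suc n)
  let ?h = "map \<rho> [0..<Suc n]"
  have edge: "(\<rho> n, \<rho> (Suc n)) \<in> E \<inter> U \<times> U" and
    follows: "\<rho> n \<in> U - VE \<inter> U \<Longrightarrow> \<rho> (Suc n) = restrict_strategy E U \<sigma> ?h"
    using play unfolding consistent_play_def by auto
  have "\<rho> 0 \<in> D" using play \<open>v \<in> D'\<close> \<open>D' \<subseteq> D\<close> by (auto simp: consistent_play_def)
  note successor = consistent_successor_in_dominion[OF G \<open>D \<subseteq> V\<close> \<sigma> this conjunct1[OF Suc.IH]]
  have in_D': "w \<in> D'" if "w \<in> D" "w \<in> U" for w
    using that \<open>U \<inter> (D - D') = {}\<close> by blast
  show ?case
  proof (cases "\<rho> n \<in> VE")
    case True
    then have "\<rho> (Suc n) \<in> D" using successor edge by blast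
    then show ?thesis using True Suc.IH edge in_D' by (simp add: consistent_prefix_Suc)
  next
    case False
    have "?h \<noteq> [] \<and> last ?h \<in> V - VE"
      using False edge \<open>U \<subseteq> V\<close> by auto
    then have \<sigma>_edge: "(last ?h, \<sigma> ?h) \<in> E"
      using \<sigma> unfolding odd_dominion_strategy_def odd_strategy_def by blast
    then have "(\<rho> n, \<sigma> ?h) \<in> E" by simp
    moreover from this have "\<sigma> ?h \<in> D" using successor by blast
    ultimately have "\<sigma> ?h \<in> D'" using closed Suc.IH False by blast
    then have "restrict_strategy E U \<sigma> ?h = \<sigma> ?h"
      using \<sigma>_edge edge \<open>D' \<subseteq> U\<close> by (intro restrict_strategy_eq) auto
    then have "\<rho> (Suc n) = \<sigma> ?h"
      using follows False edge by auto
    then show ?thesis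
      using Suc.IH edge \<open>\<sigma> ?h \<in> D'\<close> by (simp add: consistent_prefix_Suc del: upt_Suc)
  qed
qed

theorem lemma7:
  fixes V :: "'v set" and E :: "('v \<times> 'v) set" and p :: "'v \<Rightarrow> nat" and VE :: "'v set"
    and D D' U :: "'v set"
  assumes "parity_game V E p VE"
    and "odd_dominion V E p VE D"
    and "D' \<subseteq> D" and "D' \<noteq> {}"
    and "\<forall>u w. (u, w) \<in> E \<and> u \<in> D' \<and> w \<in> D - D' \<longrightarrow> u \<in> VE"
    and "U \<subseteq> V"
    and "parity_game U (E \<inter> (U \<times> U)) p (VE \<inter> U)"
    and "D' \<subseteq> U" and "U \<inter> (D - D') = {}"
  shows "odd_dominion U (E \<inter> (U \<times> U)) p (VE \<inter> U) D'"
proof -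
  obtain \<sigma> where "D \<subseteq> V" and \<sigma>: "odd_dominion_strategy V E p VE D \<sigma>"
    using assms(2) by (auto simp: odd_dominion_iff_strategy)
  have "odd_dominion_strategy U (E \<inter> U \<times> U) p (VE \<inter> U) D' (restrict_strategy E U \<sigma>)"
    unfolding odd_dominion_strategy_def
  proof (intro conjI ballI allI impI)
    show "odd_strategy U (E \<inter> U \<times> U) (VE \<inter> U) (restrict_strategy E U \<sigma>)"
      using assms(7) by (intro odd_strategy_restrict_strategy) (simp add: parity_game_def)
  next
    fix v \<rho>
    assume "v \<in> D'" and play: "consistent_play U (E \<inter> U \<times> U) (VE \<inter> U) (restrict_strategy E U \<sigma>) v \<rho>"
    note invariant = restricted_play_follows_strategy[OF assms(1) \<open>D \<subseteq> V\<close> \<sigma> assms(3,5,6,8,9) \<open>v \<in> D'\<close> play]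
    then show "\<rho> i \<in> D'" for i by blast
    have "consistent_play V E VE \<sigma> v \<rho>"
      using play invariant by (simp add: consistent_play_iff_prefixes)
    then show "odd_wins p \<rho>"
      using \<sigma> \<open>v \<in> D'\<close> assms(3) unfolding odd_dominion_strategy_def by blast
  qed
  then show ?thesis
    using assms(8) by (auto simp: odd_dominion_iff_strategy)
qed

end
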